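(* Let $m,n$ be positive integers with $n\ge2$, and let $p$ be a prime with $p>n+1$ and $p\nmid m$. Then \[ R_n^{(m)}(p)\equiv\sum_{a=1}^{n-1}\binom{m+n-a-1}{n-1}S_n^{(a)}(p)\pmod p, \] and for every integer $r\ge 2$, \[ R_n^{(m)}(p^r)\equiv m\,S_n^{(1)}(p^2)\,p^{r-2}\pmod{p^r}. \]
   Context: For a prime $p$, $\mathcal P_p$ denotes the set of positive integers not divisible by $p$. For positive integers $m,n,r$ with $p\nmid m$: $R_n^{(m)}(p^r):=\sum\frac{1}{l_1\cdots l_n}$ over all $(l_1,\dots,l_n)\in\mathcal P_p^n$ with $l_1+\dots+l_n=mp^r$; $S_n^{(m)}(p^r):=\sum\frac{1}{l_1\cdots l_n}$ over all $(l_1,\dots,l_n)\in\mathcal P_p^n$ with all $l_i<p^r$ and $l_1+\dots+l_n=mp^r$. Congruences are between rationals with denominators prime to $p$: $x\equiv y\pmod{p^k}$ means $x-y\in p^k\mathbb Z_{(p)}$. Binomial coefficients $\binom{x}{k}$ with $0\le x<k$ are $0$. *)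

theory Defs
  imports Complex_Main "HOL-Computational_Algebra.Primes"
begin

definition coprimeP :: "nat \<Rightarrow> nat set" where
  "coprimeP p = {l. 0 < l \<and> \<not> p dvd l}"

text \<open>n-tuples (l_1,...,l_n) represented as functions on {0..<n}, zero outside,
  with all entries in P_p and summing to N.\<close>
definition tuplesR :: "nat \<Rightarrow> nat \<Rightarrow> nat \<Rightarrow> (nat \<Rightarrow> nat) set" where
  "tuplesR p n N = {l. (\<forall>i<n. l i \<in> coprimeP p) \<and> (\<forall>i\<ge>n. l i = 0)
                       \<and> (\<Sum>i<n. l i) = N}"

definition R_sum :: "nat \<Rightarrow> nat \<Rightarrow> nat \<Rightarrow> nat \<Rightarrow> rat" where
  "R_sum p n m r = (\<Sum>l\<in>tuplesR p n (m * p ^ r). 1 / (\<Prod>i<n. of_nat (l i)))"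

definition S_sum :: "nat \<Rightarrow> nat \<Rightarrow> nat \<Rightarrow> nat \<Rightarrow> rat" where
  "S_sum p n m r = (\<Sum>l\<in>{l \<in> tuplesR p n (m * p ^ r). \<forall>i<n. l i < p ^ r}.
                       1 / (\<Prod>i<n. of_nat (l i)))"

text \<open>x \<equiv> y (mod p^k) for rationals: x - y \<in> p^k Z_(p).\<close>
definition rat_cong :: "rat \<Rightarrow> rat \<Rightarrow> nat \<Rightarrow> nat \<Rightarrow> bool" where
  "rat_cong x y p k \<longleftrightarrow> (\<exists>a b :: int. \<not> int p dvd b \<and>
        x - y = of_int (int p ^ k) * of_int a / of_int b)"

end

theory Submission
  imports Defs "HOL-Library.FuncSet" "HOL-Combinatorics.Transposition"
begin

text \<open>
  Write each tuple l with sum M p^s as l = x + p^s k with 0 < x_i < p^s. Then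
  sum x_i = a p^s with 1 <= a <= n - 1, and k runs over the weak compositions of M - a.
  Expanding 1 / prod (x_i + p^s k_i) to first order in p^s and counting compositions shows
  that, modulo p^(2s), R_n^(M)(p^s) is a polynomial in M of degree at most n with p-integral
  coefficients in the binomial basis C(M, i). For s = 1 this is the first congruence.

  For the second, R^(M)(p^(r+1)) = R^(Mp)(p^r), and C(Mp, i) == M C(p, i) (mod p^2) for
  0 < i < p. Hence a polynomial g = sum_(i<=N) e_i C(M, i) with N < p satisfies
  g(Mp) == M g(p) (mod p^2) if g(0) = 0 and the e_i are p-integral, and g(Mp) == g(0)
  (mod p^(k+1)) if all values of g are divisible by p^k. Applied to the polynomial
  approximating R^(M)(p^r), minus M R^(1)(p^2) p^(r-2), this drives an induction on r.
  Finally R^(1)(p^2) = S^(1)(p^2) because n >= 2.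
\<close>

text \<open>\<open>loc_int p\<close> is the localisation Z_(p), and \<open>ppow_dvd p k x\<close> means x \<in> p^k Z_(p).\<close>

definition loc_int :: "nat \<Rightarrow> rat set" where
  "loc_int p = {x. \<exists>a b :: int. \<not> int p dvd b \<and> x = of_int a / of_int b}"

definition ppow_dvd :: "nat \<Rightarrow> nat \<Rightarrow> rat \<Rightarrow> bool" where
  "ppow_dvd p k x \<longleftrightarrow> (\<exists>z \<in> loc_int p. x = of_nat p ^ k * z)"

locale prime_modulus =
  fixes p :: nat
  assumes prime: "prime p"
begin

lemma loc_int_of_int [simp]: "of_int a \<in> loc_int p"
  using prime unfolding loc_int_def
  by (intro CollectI exI[of _ a] exI[of _ 1]) (auto simp: prime_nat_iff)

lemma loc_int_of_nat [simp]: "of_nat a \<in> loc_int p"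
  using loc_int_of_int[of "int a"] by simp

lemma loc_int_0 [simp]: "0 \<in> loc_int p" and loc_int_1 [simp]: "1 \<in> loc_int p"
  using loc_int_of_int[of 0] loc_int_of_int[of 1] by simp_all

lemma loc_int_inverse_of_nat [intro]: "\<not> p dvd a \<Longrightarrow> 1 / of_nat a \<in> loc_int p"
  unfolding loc_int_def by (intro CollectI exI[of _ 1] exI[of _ "int a"]) auto

lemma loc_int_divide_of_nat [intro]: "\<not> p dvd b \<Longrightarrow> of_nat a / of_nat b \<in> loc_int p"
  unfolding loc_int_def by (intro CollectI exI[of _ "int a"] exI[of _ "int b"]) auto

lemma loc_int_mult [intro]:
  assumes "x \<in> loc_int p" "y \<in> loc_int p" shows "x * y \<in> loc_int p"
proof -
  obtain a b c d :: int where "\<not> int p dvd b" "x = of_int a / of_int b"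
    "\<not> int p dvd d" "y = of_int c / of_int d"
    using assms unfolding loc_int_def by blast
  moreover have "prime (int p)" using prime by simp
  ultimately show ?thesis unfolding loc_int_def
    by (intro CollectI exI[of _ "a * c"] exI[of _ "b * d"]) (auto simp: prime_dvd_mult_iff)
qed

lemma loc_int_add [intro]:
  assumes "x \<in> loc_int p" "y \<in> loc_int p" shows "x + y \<in> loc_int p"
proof -
  obtain a b c d :: int where "\<not> int p dvd b" "x = of_int a / of_int b"
    "\<not> int p dvd d" "y = of_int c / of_int d"
    using assms unfolding loc_int_def by blast
  moreover have "prime (int p)" using prime by simp
  moreover from calculation have "b \<noteq> 0" "d \<noteq> 0" by auto
  ultimately show ?thesis unfolding loc_int_def
    by (intro CollectI exI[of _ "a * d + c * b"] exI[of _ "b * d"])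
      (simp add: prime_dvd_mult_iff add_frac_eq)
qed

lemma loc_int_uminus [intro]: "x \<in> loc_int p \<Longrightarrow> - x \<in> loc_int p"
  using loc_int_mult[OF loc_int_of_int[of "- 1"], of x] by simp

lemma loc_int_diff [intro]: "x \<in> loc_int p \<Longrightarrow> y \<in> loc_int p \<Longrightarrow> x - y \<in> loc_int p"
  using loc_int_add[of x "- y"] by auto

lemma loc_int_sum [intro]: "(\<And>i. i \<in> A \<Longrightarrow> f i \<in> loc_int p) \<Longrightarrow> sum f A \<in> loc_int p"
  by (induction A rule: infinite_finite_induct) auto

lemma loc_int_prod [intro]: "(\<And>i. i \<in> A \<Longrightarrow> f i \<in> loc_int p) \<Longrightarrow> prod f A \<in> loc_int p"
  by (induction A rule: infinite_finite_induct) auto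

lemma loc_int_power [intro]: "x \<in> loc_int p \<Longrightarrow> x ^ k \<in> loc_int p"
  by (induction k) auto

lemma ppow_dvd_0 [simp]: "ppow_dvd p k 0"
  unfolding ppow_dvd_def by force

lemma ppow_dvd_0_iff: "ppow_dvd p 0 x \<longleftrightarrow> x \<in> loc_int p"
  unfolding ppow_dvd_def by simp

lemma ppow_dvd_pow_mult: "z \<in> loc_int p \<Longrightarrow> ppow_dvd p k (of_nat p ^ k * z)"
  unfolding ppow_dvd_def by blast

lemma ppow_dvd_add [intro]: "ppow_dvd p k x \<Longrightarrow> ppow_dvd p k y \<Longrightarrow> ppow_dvd p k (x + y)"
  unfolding ppow_dvd_def by (auto simp flip: distrib_left)

lemma ppow_dvd_mult:
  assumes "ppow_dvd p j x" "ppow_dvd p k y" shows "ppow_dvd p (j + k) (x * y)"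
  using assms unfolding ppow_dvd_def by (auto intro!: bexI[of _ "_ * _"] simp: power_add)

lemma ppow_dvd_mult_left: "z \<in> loc_int p \<Longrightarrow> ppow_dvd p k y \<Longrightarrow> ppow_dvd p k (z * y)"
  using ppow_dvd_mult[of 0 z k y] by (simp add: ppow_dvd_0_iff)

lemma ppow_dvd_mult_right: "z \<in> loc_int p \<Longrightarrow> ppow_dvd p k y \<Longrightarrow> ppow_dvd p k (y * z)"
  using ppow_dvd_mult_left[of z k y] by (simp add: mult.commute)

lemma ppow_dvd_uminus [intro]: "ppow_dvd p k x \<Longrightarrow> ppow_dvd p k (- x)"
  using ppow_dvd_mult_left[OF loc_int_of_int[of "- 1"], of k x] by simp

lemma ppow_dvd_diff [intro]: "ppow_dvd p k x \<Longrightarrow> ppow_dvd p k y \<Longrightarrow> ppow_dvd p k (x - y)"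
  using ppow_dvd_add[of k x "- y"] by auto

lemma ppow_dvd_sum [intro]: "(\<And>i. i \<in> A \<Longrightarrow> ppow_dvd p k (f i)) \<Longrightarrow> ppow_dvd p k (sum f A)"
  by (induction A rule: infinite_finite_induct) auto

lemma ppow_dvd_mono:
  assumes "j \<le> k" "ppow_dvd p k x" shows "ppow_dvd p j x"
proof -
  obtain z where "z \<in> loc_int p" "x = of_nat p ^ k * z"
    using assms(2) unfolding ppow_dvd_def by blast
  moreover have "of_nat p ^ (k - j) \<in> loc_int p"
    using loc_int_of_nat[of "p ^ (k - j)"] by simp
  ultimately show ?thesis unfolding ppow_dvd_def using assms(1)
    by (intro bexI[of _ "of_nat p ^ (k - j) * z"]) (auto simp: mult.assoc simp flip: power_add)
qed

lemma ppow_dvd_of_int: "int p ^ k dvd a \<Longrightarrow> ppow_dvd p k (of_int a)"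
  unfolding ppow_dvd_def by (auto elim!: dvdE intro!: bexI[of _ "of_int _"])

lemma ppow_dvd_of_nat: "p ^ k dvd a \<Longrightarrow> ppow_dvd p k (of_nat a)"
  using ppow_dvd_of_int[of k "int a"] by (simp flip: of_nat_power)

lemma rat_cong_iff_ppow_dvd: "rat_cong x y p k \<longleftrightarrow> ppow_dvd p k (x - y)"
  unfolding rat_cong_def ppow_dvd_def loc_int_def by force


lemma choose_mult_prime_cong:
  assumes "0 < i" "i < p"
  shows "int p ^ 2 dvd int (M * p choose i) - int M * int (p choose i)"
  using assms
proof (induction M arbitrary: i)
  case 0
  then show ?case by (simp add: binomial_eq_0)
next
  case (Suc M)
  have "p dvd (p choose t)" if "0 < t" "t < p" for t
    using dvd_choose_prime[OF that(2) _ _ prime] that by auto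
  then have p_dvd: "int p dvd int (p choose t)" if "0 < t" "t < p" for t
    using that by (simp add: int_dvd_int_iff)
  have middle: "int p ^ 2 dvd int (M * p choose t) * int (p choose (i - t))" if "t \<in> {0<..<i}" for t
  proof -
    have "int p dvd int (M * p choose t) - int M * int (p choose t)"
      using Suc.IH[of t] that Suc.prems dvd_trans[OF dvd_power[of 2 "int p"]] by auto
    moreover have "int p dvd int M * int (p choose t)"
      using p_dvd[of t] that Suc.prems by auto
    ultimately have "int p dvd int (M * p choose t)"
      using dvd_add by fastforce
    then show ?thesis
      using p_dvd[of "i - t"] that Suc.prems by (auto simp: power2_eq_square intro: mult_dvd_mono)
  qed
  \<comment> \<open>Vandermonde: C((M+1)p, i) = C(Mp, i) + C(p, i) + sum_(0<t<i) C(Mp, t) C(p, i - t).\<close>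
  have "{..i} = insert 0 (insert i {0<..<i})" using Suc.prems by auto
  then have "int (Suc M * p choose i)
      = int (M * p choose i) + int (p choose i) + (\<Sum>t\<in>{0<..<i}. int (M * p choose t) * int (p choose (i - t)))"
    using Suc.prems by (simp add: vandermonde[of "M * p" p i, symmetric] add.commute[of p])
  then have "int (Suc M * p choose i) - int (Suc M) * int (p choose i)
      = (int (M * p choose i) - int M * int (p choose i))
        + (\<Sum>t\<in>{0<..<i}. int (M * p choose t) * int (p choose (i - t)))"
    by (simp add: algebra_simps)
  moreover have "int p ^ 2 dvd (int (M * p choose i) - int M * int (p choose i))
        + (\<Sum>t\<in>{0<..<i}. int (M * p choose t) * int (p choose (i - t)))"
    by (intro dvd_add dvd_sum Suc.IH[OF Suc.prems] middle)
  ultimately show ?case by (simp only:)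
qed

lemma prime_dvd_choose_mult:
  assumes "0 < i" "i < p" shows "p dvd (M * p choose i)"
proof -
  have "int p dvd int (M * p choose i) - int M * int (p choose i)"
    using choose_mult_prime_cong[OF assms] by (meson dvd_power dvd_trans zero_less_numeral)
  moreover have "int p dvd int (p choose i)"
    using dvd_choose_prime[OF assms(2) _ _ prime] assms by (auto simp: int_dvd_int_iff)
  ultimately have "int p dvd (int (M * p choose i) - int M * int (p choose i)) + int M * int (p choose i)"
    by (intro dvd_add dvd_mult)
  then show ?thesis by simp
qed

end

definition newton_series :: "nat \<Rightarrow> (nat \<Rightarrow> rat) \<Rightarrow> nat \<Rightarrow> rat" where
  "newton_series N e M = (\<Sum>i\<le>N. of_nat (M choose i) * e i)"

lemma newton_series_0 [simp]: "newton_series N e 0 = e 0"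
  unfolding newton_series_def by (simp add: binomial_eq_0 sum.atMost_shift del: sum.atMost_Suc)

lemma newton_series_minus_linear:
  assumes "1 \<le> N"
  shows "newton_series N e M - of_nat M * c = newton_series N (\<lambda>i. e i - (if i = 1 then c else 0)) M"
proof -
  have "(\<Sum>i\<le>N. of_nat (M choose i) * (if i = 1 then c else 0))
      = (\<Sum>i\<le>N. if i = 1 then of_nat (M choose i) * c else 0)"
    by (intro sum.cong) auto
  also have "\<dots> = of_nat M * c"
    using assms by (subst sum.delta) auto
  finally have "(\<Sum>i\<le>N. of_nat (M choose i) * (if i = 1 then c else 0)) = of_nat M * c" .
  then show ?thesis
    unfolding newton_series_def by (simp add: right_diff_distrib sum_subtractf)
qed

lemma choose_add_newton_series:
  assumes "j \<le> N"
  shows "of_nat ((M + c) choose j) = newton_series N (\<lambda>i. if i \<le> j then of_nat (c choose (j - i)) else 0) M"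
proof -
  have "newton_series N (\<lambda>i. if i \<le> j then of_nat (c choose (j - i)) else 0) M
      = (\<Sum>i\<le>j. of_nat (M choose i) * of_nat (c choose (j - i)))"
    unfolding newton_series_def using assms by (intro sum.mono_neutral_cong_right) auto
  also have "\<dots> = of_nat ((M + c) choose j)"
    by (simp flip: of_nat_mult of_nat_sum vandermonde)
  finally show ?thesis ..
qed

context prime_modulus
begin

lemma newton_series_coeff_ppow_dvd:
  assumes "\<And>M. M \<le> N \<Longrightarrow> ppow_dvd p k (newton_series N e M)" "i \<le> N"
  shows "ppow_dvd p k (e i)"
  using assms(2)
proof (induction i rule: less_induct)
  case (less i)
  have "newton_series N e i = (\<Sum>j\<le>i. of_nat (i choose j) * e j)"
    unfolding newton_series_def by (rule sum.mono_neutral_right) (use less in auto)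
  also have "\<dots> = (\<Sum>j<i. of_nat (i choose j) * e j) + e i"
    by (simp add: lessThan_Suc_atMost[symmetric])
  finally have "e i = newton_series N e i - (\<Sum>j<i. of_nat (i choose j) * e j)"
    by simp
  moreover have "ppow_dvd p k (\<Sum>j<i. of_nat (i choose j) * e j)"
    using less by (intro ppow_dvd_sum ppow_dvd_mult_left) auto
  ultimately show ?case using assms(1) less.prems by auto
qed

lemma newton_series_mult_prime_ppow_dvd:
  assumes "N < p" "ppow_dvd p (Suc k) (e 0)"
    and "\<And>M. M \<le> N \<Longrightarrow> ppow_dvd p k (newton_series N e M)"
  shows "ppow_dvd p (Suc k) (newton_series N e (M * p))"
  unfolding newton_series_def
proof (intro ppow_dvd_sum)
  fix i assume i: "i \<in> {..N}"
  show "ppow_dvd p (Suc k) (of_nat (M * p choose i) * e i)"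
  proof (cases "i = 0")
    case False
    then have "ppow_dvd p 1 (of_nat (M * p choose i))"
      using assms(1) i by (intro ppow_dvd_of_nat) (simp add: prime_dvd_choose_mult)
    moreover have "ppow_dvd p k (e i)"
      using newton_series_coeff_ppow_dvd[OF assms(3)] i by simp
    ultimately show ?thesis using ppow_dvd_mult by fastforce
  qed (use assms(2) in simp)
qed

lemma newton_series_mult_prime_cong:
  assumes "N < p" "e 0 = 0" "\<And>i. e i \<in> loc_int p"
  shows "ppow_dvd p 2 (newton_series N e (M * p) - of_nat M * newton_series N e p)"
proof -
  have "newton_series N e (M * p) - of_nat M * newton_series N e p
      = (\<Sum>i\<le>N. of_int (int (M * p choose i) - int M * int (p choose i)) * e i)"
    unfolding newton_series_def
    by (simp add: sum_distrib_left sum_subtractf[symmetric] left_diff_distrib mult.assoc)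
  also have "ppow_dvd p 2 \<dots>"
  proof (intro ppow_dvd_sum)
    fix i assume i: "i \<in> {..N}"
    show "ppow_dvd p 2 (of_int (int (M * p choose i) - int M * int (p choose i)) * e i)"
    proof (cases "i = 0")
      case False
      then show ?thesis using i assms(1,3)
        by (intro ppow_dvd_mult_right ppow_dvd_of_int choose_mult_prime_cong) auto
    qed (use assms(2) in simp)
  qed
  finally show ?thesis .
qed

end

definition weak_compositions :: "nat \<Rightarrow> nat \<Rightarrow> (nat \<Rightarrow> nat) set" where
  "weak_compositions n j = {k. (\<forall>i\<ge>n. k i = 0) \<and> (\<Sum>i<n. k i) = j}"

lemma bij_betw_weak_compositions_lists:
  "bij_betw (\<lambda>k. map k [0..<n]) (weak_compositions n j) {l. length l = n \<and> sum_list l = j}"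
proof (rule bij_betwI[where g = "\<lambda>l i. if i < n then l ! i else 0"])
  show "(\<lambda>k. map k [0..<n]) \<in> weak_compositions n j \<rightarrow> {l. length l = n \<and> sum_list l = j}"
    by (auto simp: weak_compositions_def interv_sum_list_conv_sum_set_nat atLeast0LessThan)
  show "(\<lambda>l i. if i < n then l ! i else 0) \<in> {l. length l = n \<and> sum_list l = j} \<rightarrow> weak_compositions n j"
    by (auto simp: weak_compositions_def sum_list_sum_nth atLeast0LessThan)
qed (auto simp: weak_compositions_def fun_eq_iff intro: nth_equalityI)

lemma finite_weak_compositions: "finite (weak_compositions n j)"
proof -
  have "{l. length l = n \<and> sum_list l = j} \<subseteq> {l. set l \<subseteq> {..j} \<and> length l = n}"
    by (auto simp: member_le_sum_list)
  then have "finite {l. length l = n \<and> sum_list l = j}"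
    by (rule finite_subset) (simp add: finite_lists_length_eq)
  then show ?thesis using bij_betw_finite[OF bij_betw_weak_compositions_lists] by blast
qed

lemma card_weak_compositions:
  assumes "0 < n" shows "card (weak_compositions n j) = (j + n - 1) choose (n - 1)"
  using bij_betw_same_card[OF bij_betw_weak_compositions_lists] card_length_sum_list[of n j]
    binomial_symmetric[of j "j + n - 1"] assms by simp

lemma sum_weak_compositions_coordinate_eq:
  assumes "i < n" "i' < n"
  shows "(\<Sum>k\<in>weak_compositions n j. k i) = (\<Sum>k\<in>weak_compositions n j. k i')"
proof -
  let ?\<tau> = "transpose i i'"
  have "k \<circ> ?\<tau> \<in> weak_compositions n j" if "k \<in> weak_compositions n j" for k
  proof -
    have "(\<Sum>x<n. k (?\<tau> x)) = (\<Sum>x<n. k x)"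
      using assms by (intro sum.reindex_bij_betw) simp
    then show ?thesis using that assms by (auto simp: weak_compositions_def transpose_def)
  qed
  then have "bij_betw (\<lambda>k. k \<circ> ?\<tau>) (weak_compositions n j) (weak_compositions n j)"
    by (intro bij_betwI[where g = "\<lambda>k. k \<circ> ?\<tau>"]) (auto simp: fun_eq_iff)
  from sum.reindex_bij_betw[OF this, of "\<lambda>k. k i'"] show ?thesis by simp
qed

lemma sum_weak_compositions_coordinate:
  assumes "i < n" shows "(\<Sum>k\<in>weak_compositions n j. k i) = (j + n - 1) choose n"
proof -
  let ?W = "weak_compositions n j"
  have "n * (\<Sum>k\<in>?W. k i) = (\<Sum>i'<n. \<Sum>k\<in>?W. k i)" by simp
  also have "\<dots> = (\<Sum>i'<n. \<Sum>k\<in>?W. k i')"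
    by (rule sum.cong[OF refl]) (simp add: sum_weak_compositions_coordinate_eq[OF assms])
  also have "\<dots> = (\<Sum>k\<in>?W. \<Sum>i'<n. k i')" by (rule sum.swap)
  also have "\<dots> = j * card ?W" by (simp add: weak_compositions_def)
  also have "\<dots> = n * ((j + n - 1) choose n)"
  proof (cases j)
    case (Suc b)
    then show ?thesis using assms Suc_times_binomial_add[of "n - 1" b]
      by (simp add: card_weak_compositions add.commute)
  qed (use assms in simp)
  finally show ?thesis using assms by simp
qed

lemma finite_tuplesR: "finite (tuplesR p n N)"
  by (rule finite_subset[OF _ finite_weak_compositions[of n N]])
    (auto simp: tuplesR_def weak_compositions_def)

lemma coprimeP_add_mult: "x \<in> coprimeP p \<Longrightarrow> p dvd q \<Longrightarrow> x + q * k \<in> coprimeP p"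
  unfolding coprimeP_def by (auto simp: dvd_add_left_iff)

lemma coprimeP_mod: "l \<in> coprimeP p \<Longrightarrow> p dvd q \<Longrightarrow> l mod q \<in> coprimeP p"
  unfolding coprimeP_def by (auto simp: dvd_mod_iff intro: gr0I dest: mod_0_imp_dvd dvd_trans)

definition reduced_tuples :: "nat \<Rightarrow> nat \<Rightarrow> nat \<Rightarrow> nat \<Rightarrow> (nat \<Rightarrow> nat) set" where
  "reduced_tuples p n s a = {x \<in> tuplesR p n (a * p ^ s). \<forall>i<n. x i < p ^ s}"

lemma finite_reduced_tuples: "finite (reduced_tuples p n s a)"
  unfolding reduced_tuples_def using finite_tuplesR by simp

context prime_modulus
begin

text \<open>The guard \<open>a \<le> M\<close> compensates for the truncated subtraction in \<open>M - a\<close>.\<close>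

lemma sum_tuplesR_decompose:
  assumes "0 < s" "0 < n"
  shows "(\<Sum>l\<in>tuplesR p n (M * p ^ s). f l)
    = (\<Sum>a=1..n-1. \<Sum>x\<in>reduced_tuples p n s a.
         \<Sum>k\<in>{k \<in> weak_compositions n (M - a). a \<le> M}. f (\<lambda>i. x i + p ^ s * k i))"
proof -
  define q where "q = p ^ s"
  have "1 < q" "p dvd q"
    using assms(1) one_less_power[OF prime_gt_1_nat[OF prime]] by (simp_all add: q_def dvd_power)
  define K where "K a = {k \<in> weak_compositions n (M - a). a \<le> M}" for a
  define D where "D = (SIGMA a:{1..n-1}. SIGMA x:reduced_tuples p n s a. K a)"
  define h where "h = (\<lambda>(a::nat, x::nat \<Rightarrow> nat, k::nat \<Rightarrow> nat) i. x i + q * k i)"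
  define g where "g l = ((\<Sum>i<n. l i mod q) div q, \<lambda>i. l i mod q, \<lambda>i. l i div q)" for l :: "nat \<Rightarrow> nat"
  have "bij_betw h D (tuplesR p n (M * q))"
  proof (rule bij_betwI[where g = g])
    show "h \<in> D \<rightarrow> tuplesR p n (M * q)"
    proof
      fix d assume "d \<in> D"
      then obtain a x k where d: "d = (a, x, k)" "x \<in> reduced_tuples p n s a" "k \<in> K a"
        unfolding D_def by auto
      then have "(\<Sum>i<n. x i + q * k i) = a * q + q * (M - a)" "a \<le> M"
        by (auto simp: sum.distrib reduced_tuples_def tuplesR_def K_def weak_compositions_def
            q_def simp flip: sum_distrib_left)
      then have "(\<Sum>i<n. x i + q * k i) = M * q"
        by (simp add: algebra_simps)
      then show "h d \<in> tuplesR p n (M * q)"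
        using d \<open>p dvd q\<close> by (auto simp: h_def reduced_tuples_def tuplesR_def K_def
            weak_compositions_def coprimeP_add_mult)
    qed
    show "g \<in> tuplesR p n (M * q) \<rightarrow> D"
    proof
      fix l assume l: "l \<in> tuplesR p n (M * q)"
      define x where "x = (\<lambda>i. l i mod q)"
      define k where "k = (\<lambda>i. l i div q)"
      define a where "a = (\<Sum>i<n. x i) div q"
      have x: "x i \<in> coprimeP p" if "i < n" for i
        using l that \<open>p dvd q\<close> by (auto simp: x_def tuplesR_def coprimeP_mod)
      have sum_l: "(\<Sum>i<n. x i) + q * (\<Sum>i<n. k i) = M * q"
        using l by (simp add: tuplesR_def x_def k_def sum_distrib_left flip: sum.distrib)
      then have "q dvd (\<Sum>i<n. x i) + q * (\<Sum>i<n. k i)"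
        by simp
      then have "q dvd (\<Sum>i<n. x i)"
        by (simp add: dvd_add_left_iff)
      then have sum_x: "(\<Sum>i<n. x i) = a * q"
        by (simp add: a_def)
      have "(a + (\<Sum>i<n. k i)) * q = a * q + q * (\<Sum>i<n. k i)"
        by (simp add: algebra_simps)
      also have "\<dots> = M * q"
        using sum_l unfolding sum_x .
      finally have "(a + (\<Sum>i<n. k i)) * q = M * q" .
      then have a_k: "a + (\<Sum>i<n. k i) = M"
        using \<open>1 < q\<close> by simp
      have "0 < x 0" using x[of 0] assms(2) by (simp add: coprimeP_def)
      then have "0 < (\<Sum>i<n. x i)"
        using member_le_sum[of 0 "{..<n}" x] assms(2) by simp
      then have "1 \<le> a" using sum_x by (simp add: Suc_le_eq)
      have "(\<Sum>i<n. x i) < (\<Sum>i<n. q)"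
        using assms(2) \<open>1 < q\<close> by (intro sum_strict_mono) (auto simp: x_def)
      then have "a < n" using sum_x by simp
      have "x \<in> reduced_tuples p n s a"
        using x sum_x l \<open>1 < q\<close> by (auto simp: reduced_tuples_def tuplesR_def x_def simp flip: q_def)
      moreover have "k \<in> K a"
        using a_k l \<open>1 < q\<close> by (auto simp: K_def weak_compositions_def tuplesR_def k_def)
      moreover have "g l = (a, x, k)"
        unfolding g_def a_def x_def k_def ..
      ultimately show "g l \<in> D"
        using \<open>1 \<le> a\<close> \<open>a < n\<close> by (simp add: D_def)
    qed
    show "g (h d) = d" if "d \<in> D" for d
    proof -
      obtain a x k where d: "d = (a, x, k)" "x \<in> reduced_tuples p n s a"
        using \<open>d \<in> D\<close> unfolding D_def by auto
      then have "x i < q" for i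
        using \<open>1 < q\<close> by (cases "i < n") (auto simp: reduced_tuples_def tuplesR_def simp flip: q_def)
      moreover have "(\<Sum>i<n. x i) = a * q"
        using d by (simp add: reduced_tuples_def tuplesR_def q_def)
      ultimately show ?thesis using d \<open>1 < q\<close> by (simp add: g_def h_def)
    qed
    show "h (g l) = l" for l
      by (simp add: g_def h_def)
  qed
  then have "(\<Sum>l\<in>tuplesR p n (M * q). f l) = (\<Sum>d\<in>D. f (h d))"
    by (simp add: sum.reindex_bij_betw)
  also have "\<dots> = (\<Sum>a=1..n-1. \<Sum>x\<in>reduced_tuples p n s a. \<Sum>k\<in>K a. f (h (a, x, k)))"
  proof -
    have "finite (K a)" for a
      by (simp add: K_def finite_weak_compositions)
    then show ?thesis
      unfolding D_def by (simp add: sum.Sigma finite_reduced_tuples split_def)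
  qed
  finally show ?thesis by (simp add: q_def K_def h_def)
qed

end

definition tuple_weight :: "nat \<Rightarrow> (nat \<Rightarrow> nat) \<Rightarrow> rat" where
  "tuple_weight n l = 1 / (\<Prod>i<n. of_nat (l i))"

lemma tuple_weight_eq_prod: "tuple_weight n l = (\<Prod>i<n. 1 / of_nat (l i))"
  unfolding tuple_weight_def by (simp add: prod_dividef)

context prime_modulus
begin

lemma tuple_weight_loc_int: "\<forall>i<n. x i \<in> coprimeP p \<Longrightarrow> tuple_weight n x \<in> loc_int p"
  unfolding tuple_weight_eq_prod coprimeP_def by auto

lemma prod_first_order_cong:
  assumes "finite I"
    and "\<And>i. i \<in> I \<Longrightarrow> a i \<in> loc_int p \<and> b i \<in> loc_int p \<and> c i \<in> loc_int p"
    and "\<And>i. i \<in> I \<Longrightarrow> ppow_dvd p (2 * s) (a i - b i * (1 - of_nat p ^ s * c i))"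
  shows "ppow_dvd p (2 * s) ((\<Prod>i\<in>I. a i) - (\<Prod>i\<in>I. b i) * (1 - of_nat p ^ s * (\<Sum>i\<in>I. c i)))"
  using assms
proof (induction I rule: finite_induct)
  case (insert j I)
  let ?q = "of_nat p ^ s :: rat"
  define A where "A = (\<Prod>i\<in>I. a i)"
  define B where "B = (\<Prod>i\<in>I. b i)"
  define C where "C = (\<Sum>i\<in>I. c i)"
  have j: "a j \<in> loc_int p" "b j \<in> loc_int p" "c j \<in> loc_int p"
    using insert.prems(1)[of j] by auto
  have "A \<in> loc_int p" "B \<in> loc_int p" "C \<in> loc_int p"
    using insert.prems(1) unfolding A_def B_def C_def by blast+
  then have "A \<in> loc_int p" "b j * (1 - ?q * c j) \<in> loc_int p" "b j * B * c j * C \<in> loc_int p"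
    using j by (auto intro!: loc_int_mult loc_int_diff loc_int_power)
  moreover have "ppow_dvd p (2 * s) (A - B * (1 - ?q * C))"
    using insert by (simp add: A_def B_def C_def)
  moreover have "ppow_dvd p (2 * s) (a j - b j * (1 - ?q * c j))"
    using insert by simp
  ultimately have "ppow_dvd p (2 * s) ((a j - b j * (1 - ?q * c j)) * A
      + b j * (1 - ?q * c j) * (A - B * (1 - ?q * C)) + of_nat p ^ (2 * s) * (b j * B * c j * C))"
    by (intro ppow_dvd_add ppow_dvd_mult_right[of A] ppow_dvd_mult_left ppow_dvd_pow_mult)
  also have "(a j - b j * (1 - ?q * c j)) * A + b j * (1 - ?q * c j) * (A - B * (1 - ?q * C))
      + of_nat p ^ (2 * s) * (b j * B * c j * C) = a j * A - b j * B * (1 - ?q * (c j + C))"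
    by (simp add: algebra_simps power_mult mult.commute[of 2 s] power2_eq_square)
  finally show ?case
    using insert.hyps by (simp add: A_def B_def C_def)
qed simp

lemma inverse_shift_cong:
  assumes "x \<in> coprimeP p" "0 < s"
  shows "ppow_dvd p (2 * s)
    (1 / of_nat (x + p ^ s * k) - 1 / of_nat x * (1 - of_nat p ^ s * (of_nat k / of_nat x)))"
proof -
  have "x + p ^ s * k \<in> coprimeP p"
    using assms by (intro coprimeP_add_mult) (simp_all add: dvd_power)
  then have nz: "x \<noteq> 0" "x + p ^ s * k \<noteq> 0"
    and "1 / of_nat (x + p ^ s * k) \<in> loc_int p" "1 / of_nat x \<in> loc_int p"
    using assms by (auto simp: coprimeP_def intro!: loc_int_inverse_of_nat simp del: of_nat_add of_nat_mult)
  then have "of_nat k ^ 2 * (1 / of_nat x) ^ 2 * (1 / of_nat (x + p ^ s * k)) \<in> loc_int p"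
    by (intro loc_int_mult loc_int_power) simp_all
  moreover have "1 / of_nat (x + p ^ s * k) - 1 / of_nat x * (1 - of_nat p ^ s * (of_nat k / of_nat x))
      = of_nat p ^ (2 * s) * (of_nat k ^ 2 * (1 / of_nat x) ^ 2 * (1 / of_nat (x + p ^ s * k)) :: rat)"
  proof -
    define X Y K Q :: rat
      where "X = of_nat x" and "Y = of_nat (x + p ^ s * k)" and "K = of_nat k" and "Q = of_nat p ^ s"
    have "X \<noteq> 0" "Y \<noteq> 0"
      using nz unfolding X_def Y_def by (simp_all only: of_nat_eq_0_iff not_False_eq_True)
    have QK: "Q * K = Y - X"
      by (simp add: X_def Y_def K_def Q_def)
    have "1 / Y - 1 / X * (1 - Q * (K / X)) = 1 / Y - 1 / X * (1 - (Q * K) / X)"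
      by simp
    also have "\<dots> = (Q * K) ^ 2 * (1 / X) ^ 2 * (1 / Y)"
      unfolding QK using \<open>X \<noteq> 0\<close> \<open>Y \<noteq> 0\<close> by (simp add: field_simps power2_eq_square)
    also have "\<dots> = of_nat p ^ (2 * s) * (K ^ 2 * (1 / X) ^ 2 * (1 / Y))"
      by (simp add: Q_def power_mult_distrib mult.commute[of 2 s] power_mult)
    finally show ?thesis
      by (simp only: X_def Y_def K_def Q_def)
  qed
  ultimately show ?thesis by (simp only: ppow_dvd_pow_mult)
qed

lemma tuple_weight_shift_cong:
  assumes "\<forall>i<n. x i \<in> coprimeP p" "0 < s"
  shows "ppow_dvd p (2 * s) (tuple_weight n (\<lambda>i. x i + p ^ s * k i)
    - tuple_weight n x * (1 - of_nat p ^ s * (\<Sum>i<n. of_nat (k i) / of_nat (x i))))"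
proof -
  have "x i + p ^ s * k i \<in> coprimeP p" if "i < n" for i
    using assms that by (intro coprimeP_add_mult) (simp_all add: dvd_power)
  then show ?thesis
    unfolding tuple_weight_eq_prod using assms
    by (intro prod_first_order_cong inverse_shift_cong)
      (auto simp: coprimeP_def simp del: of_nat_add of_nat_mult)
qed

lemma sum_tuple_weight_shift_cong:
  assumes "\<forall>i<n. x i \<in> coprimeP p" "0 < s" "finite K"
  shows "ppow_dvd p (2 * s) ((\<Sum>k\<in>K. tuple_weight n (\<lambda>i. x i + p ^ s * k i))
    - tuple_weight n x * (of_nat (card K) - of_nat p ^ s * (\<Sum>i<n. of_nat (\<Sum>k\<in>K. k i) / of_nat (x i))))"
proof -
  have "(\<Sum>i<n. of_nat (\<Sum>k\<in>K. k i) / of_nat (x i)) = (\<Sum>k\<in>K. \<Sum>i<n. of_nat (k i) / (of_nat (x i) :: rat))"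
    by (simp add: sum_divide_distrib sum.swap[of _ K])
  then have "tuple_weight n x * (of_nat (card K) - of_nat p ^ s * (\<Sum>i<n. of_nat (\<Sum>k\<in>K. k i) / of_nat (x i)))
      = (\<Sum>k\<in>K. tuple_weight n x * (1 - of_nat p ^ s * (\<Sum>i<n. of_nat (k i) / of_nat (x i))))"
    by (simp add: sum_distrib_left sum_subtractf right_diff_distrib)
  then show ?thesis
    using assms by (simp add: tuple_weight_shift_cong ppow_dvd_sum flip: sum_subtractf)
qed

end

lemma card_weak_compositions_diff:
  assumes "a < n"
  shows "card {k \<in> weak_compositions n (M - a). a \<le> M} = (M + (n - 1 - a)) choose (n - 1)"
proof (cases "a \<le> M")
  case True
  then have "M - a + n - 1 = M + (n - 1 - a)" using assms by simp
  then show ?thesis using True assms by (simp add: card_weak_compositions)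
qed (use assms in \<open>simp add: binomial_eq_0\<close>)

lemma sum_weak_compositions_diff_coordinate:
  assumes "a < n" "i < n"
  shows "(\<Sum>k\<in>{k \<in> weak_compositions n (M - a). a \<le> M}. k i) = (M + (n - 1 - a)) choose n"
proof (cases "a \<le> M")
  case True
  then have "M - a + n - 1 = M + (n - 1 - a)" using assms by simp
  then show ?thesis using True assms by (simp add: sum_weak_compositions_coordinate)
qed (use assms in \<open>simp add: binomial_eq_0\<close>)

definition T_sum :: "nat \<Rightarrow> nat \<Rightarrow> nat \<Rightarrow> nat \<Rightarrow> rat" where
  "T_sum p n a s = (\<Sum>x\<in>reduced_tuples p n s a. tuple_weight n x * (\<Sum>i<n. 1 / of_nat (x i)))"

definition R_approx :: "nat \<Rightarrow> nat \<Rightarrow> nat \<Rightarrow> nat \<Rightarrow> rat" where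
  "R_approx p n M s = (\<Sum>a=1..n-1. of_nat ((M + (n - 1 - a)) choose (n - 1)) * S_sum p n a s
     - of_nat p ^ s * of_nat ((M + (n - 1 - a)) choose n) * T_sum p n a s)"

lemma S_sum_eq: "S_sum p n a s = (\<Sum>x\<in>reduced_tuples p n s a. tuple_weight n x)"
  unfolding S_sum_def reduced_tuples_def tuple_weight_def ..

context prime_modulus
begin

lemma R_sum_approx_cong:
  assumes "0 < s" "0 < n"
  shows "ppow_dvd p (2 * s) (R_sum p n M s - R_approx p n M s)"
proof -
  let ?q = "of_nat p ^ s :: rat"
  define K where "K a = {k \<in> weak_compositions n (M - a). a \<le> M}" for a
  define C1 where "C1 a = (of_nat ((M + (n - 1 - a)) choose (n - 1)) :: rat)" for a
  define C2 where "C2 a = (of_nat ((M + (n - 1 - a)) choose n) :: rat)" for a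
  define F where "F a x = (\<Sum>k\<in>K a. tuple_weight n (\<lambda>i. x i + p ^ s * k i))
    - tuple_weight n x * (of_nat (card (K a)) - ?q * (\<Sum>i<n. of_nat (\<Sum>k\<in>K a. k i) / of_nat (x i)))"
    for a x
  have F_eq: "F a x = (\<Sum>k\<in>K a. tuple_weight n (\<lambda>i. x i + p ^ s * k i))
      - (C1 a * tuple_weight n x - ?q * C2 a * (tuple_weight n x * (\<Sum>i<n. 1 / of_nat (x i))))"
    if "a \<in> {1..n-1}" for a x
  proof -
    have "a < n" using that by auto
    then have "(\<Sum>i<n. of_nat (\<Sum>k\<in>K a. k i) / of_nat (x i)) = (\<Sum>i<n. C2 a * (1 / of_nat (x i)))"
      by (intro sum.cong) (simp_all add: K_def C2_def sum_weak_compositions_diff_coordinate del: of_nat_sum)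
    with \<open>a < n\<close> show ?thesis
      by (simp add: F_def K_def C1_def card_weak_compositions_diff sum_distrib_left algebra_simps)
  qed
  have "R_sum p n M s - R_approx p n M s = (\<Sum>a=1..n-1. \<Sum>x\<in>reduced_tuples p n s a. F a x)"
    unfolding R_sum_def tuple_weight_def[symmetric] sum_tuplesR_decompose[OF assms] R_approx_def
      S_sum_eq T_sum_def
    by (simp add: F_eq C1_def C2_def K_def sum_subtractf sum_distrib_left mult.assoc)
  also have "ppow_dvd p (2 * s) \<dots>"
    unfolding F_def using assms
    by (intro ppow_dvd_sum sum_tuple_weight_shift_cong)
      (auto simp: K_def finite_weak_compositions reduced_tuples_def tuplesR_def)
  finally show ?thesis .
qed

end

lemma R_approx_0: "R_approx p n 0 s = 0"
  unfolding R_approx_def by (intro sum.neutral) (auto simp: binomial_eq_0)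

lemma R_sum_Suc: "R_sum p n M (Suc s) = R_sum p n (M * p) s"
  unfolding R_sum_def by (simp add: mult.assoc mult.commute[of p])

lemma S_sum_1_eq_R_sum:
  assumes "2 \<le> n" shows "S_sum p n 1 s = R_sum p n 1 s"
proof -
  have "l i < p ^ s" if l: "l \<in> tuplesR p n (1 * p ^ s)" and "i < n" for l i
  proof -
    define j where "j = (if i = 0 then 1 else 0 :: nat)"
    have "j < n" "j \<noteq> i" using assms \<open>i < n\<close> by (auto simp: j_def)
    then have "l i + l j \<le> (\<Sum>i<n. l i)"
      using \<open>i < n\<close> sum_mono2[of "{..<n}" "{i, j}" l] by simp
    moreover have "0 < l j" using l \<open>j < n\<close> by (simp add: tuplesR_def coprimeP_def)
    ultimately show ?thesis using l by (simp add: tuplesR_def)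
  qed
  then have "{l \<in> tuplesR p n (1 * p ^ s). \<forall>i<n. l i < p ^ s} = tuplesR p n (1 * p ^ s)"
    by blast
  then show ?thesis unfolding S_sum_def R_sum_def by simp
qed

context prime_modulus
begin

lemma S_sum_loc_int: "S_sum p n a s \<in> loc_int p"
  unfolding S_sum_eq
  by (intro loc_int_sum tuple_weight_loc_int) (simp add: reduced_tuples_def tuplesR_def)

lemma T_sum_loc_int: "T_sum p n a s \<in> loc_int p"
  unfolding T_sum_def
  by (intro loc_int_sum loc_int_mult tuple_weight_loc_int)
    (auto simp: reduced_tuples_def tuplesR_def coprimeP_def)

lemma R_approx_newton_series:
  "\<exists>e. (\<forall>i. e i \<in> loc_int p) \<and> (\<forall>M. R_approx p n M s = newton_series n e M)"
proof -
  define g :: "nat \<Rightarrow> nat \<Rightarrow> nat \<Rightarrow> rat" where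
    "g c j i = (if i \<le> j then of_nat (c choose (j - i)) else 0)" for c j i
  define e where "e i = (\<Sum>a=1..n-1. g (n - 1 - a) (n - 1) i * S_sum p n a s
      - of_nat p ^ s * g (n - 1 - a) n i * T_sum p n a s)" for i
  have "e i \<in> loc_int p" for i
    unfolding e_def g_def by (intro loc_int_sum loc_int_diff loc_int_mult S_sum_loc_int T_sum_loc_int) auto
  moreover have "R_approx p n M s = newton_series n e M" for M
  proof -
    have "of_nat ((M + c) choose j) = newton_series n (g c j) M" if "j \<le> n" for c j
      unfolding g_def using that by (rule choose_add_newton_series)
    then have "R_approx p n M s = (\<Sum>a=1..n-1. newton_series n (g (n - 1 - a) (n - 1)) M * S_sum p n a s
        - of_nat p ^ s * newton_series n (g (n - 1 - a) n) M * T_sum p n a s)"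
      unfolding R_approx_def by simp
    also have "\<dots> = (\<Sum>a=1..n-1. \<Sum>i\<le>n. of_nat (M choose i) * (g (n - 1 - a) (n - 1) i * S_sum p n a s
        - of_nat p ^ s * g (n - 1 - a) n i * T_sum p n a s))"
      unfolding newton_series_def
      by (simp add: sum_distrib_left sum_distrib_right sum_subtractf right_diff_distrib mult_ac)
    also have "\<dots> = newton_series n e M"
      unfolding newton_series_def e_def sum_distrib_left by (rule sum.swap)
    finally show ?thesis .
  qed
  ultimately show ?thesis by blast
qed

lemma R_sum_cong_mod_p:
  assumes "0 < n"
  shows "ppow_dvd p 1 (R_sum p n m 1
    - (\<Sum>a=1..n-1. of_nat ((m + n - a - 1) choose (n - 1)) * S_sum p n a 1))"
proof -
  have "R_approx p n m 1 - (\<Sum>a=1..n-1. of_nat ((m + n - a - 1) choose (n - 1)) * S_sum p n a 1)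
      = of_nat p ^ 1 * - (\<Sum>a=1..n-1. of_nat ((m + (n - 1 - a)) choose n) * T_sum p n a 1)"
    unfolding R_approx_def sum_subtractf[symmetric] sum_distrib_left sum_negf[symmetric]
    by (rule sum.cong) (auto simp: Suc_diff_Suc)
  also have "ppow_dvd p 1 \<dots>"
    by (intro ppow_dvd_pow_mult loc_int_uminus loc_int_sum loc_int_mult T_sum_loc_int) simp
  finally have "ppow_dvd p 1 (R_approx p n m 1
      - (\<Sum>a=1..n-1. of_nat ((m + n - a - 1) choose (n - 1)) * S_sum p n a 1))" .
  moreover have "ppow_dvd p 1 (R_sum p n m 1 - R_approx p n m 1)"
    using ppow_dvd_mono[OF _ R_sum_approx_cong[OF _ assms]] by simp
  ultimately show ?thesis
    using ppow_dvd_add by fastforce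
qed

lemma R_sum_cong_mult_prime_power:
  assumes "0 < n" "n < p"
  shows "ppow_dvd p (d + 2) (R_sum p n M (d + 2) - of_nat M * R_sum p n 1 2 * of_nat p ^ d)"
proof (induction d arbitrary: M)
  case 0
  obtain e where e: "\<And>i. e i \<in> loc_int p" "\<And>M. R_approx p n M 1 = newton_series n e M"
    using R_approx_newton_series by blast
  have approx: "ppow_dvd p 2 (R_sum p n X 1 - newton_series n e X)" for X
    using R_sum_approx_cong[of 1 n X] assms unfolding e by simp
  have "e 0 = 0"
    using e(2)[of 0] by (simp add: R_approx_0)
  then have newton: "ppow_dvd p 2 (newton_series n e (M * p) - of_nat M * newton_series n e p)"
    using assms(2) e(1) by (intro newton_series_mult_prime_cong)
  have "ppow_dvd p 2 ((R_sum p n (M * p) 1 - newton_series n e (M * p))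
      + (newton_series n e (M * p) - of_nat M * newton_series n e p)
      - of_nat M * (R_sum p n p 1 - newton_series n e p))"
    using ppow_dvd_diff[OF ppow_dvd_add[OF approx newton] ppow_dvd_mult_left[OF loc_int_of_nat approx]] .
  then show ?case
    using R_sum_Suc[of p n M 1] R_sum_Suc[of p n 1 1] by (simp add: algebra_simps numeral_2_eq_2)
next
  case (Suc d)
  define r where "r = d + 2"
  define c where "c = R_sum p n 1 2 * of_nat p ^ d"
  obtain e where e: "\<And>M. R_approx p n M r = newton_series n e M"
    using R_approx_newton_series by blast
  define e' where "e' = (\<lambda>i. e i - (if i = 1 then c else 0))"
  have approx: "ppow_dvd p (2 * r) (R_sum p n X r - newton_series n e X)" for X
    using R_sum_approx_cong[of r n X] assms unfolding e by (simp add: r_def)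
  have g: "newton_series n e' X = newton_series n e X - of_nat X * c" for X
    using newton_series_minus_linear[of n e X c] assms by (simp add: e'_def)
  have "ppow_dvd p r (newton_series n e' X)" for X
  proof -
    have "newton_series n e' X = (R_sum p n X r - of_nat X * c) - (R_sum p n X r - newton_series n e X)"
      by (simp add: g)
    moreover have "ppow_dvd p r (R_sum p n X r - of_nat X * c)"
      using Suc.IH by (simp add: r_def c_def mult.assoc)
    moreover have "ppow_dvd p r (R_sum p n X r - newton_series n e X)"
      using ppow_dvd_mono[OF _ approx] by simp
    ultimately show ?thesis
      by (simp only: ppow_dvd_diff)
  qed
  moreover have "e' 0 = 0"
    using e[of 0] by (simp add: e'_def R_approx_0)
  ultimately have "ppow_dvd p (Suc r) (newton_series n e' (M * p))"
    using assms(2) by (intro newton_series_mult_prime_ppow_dvd) auto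
  moreover have "ppow_dvd p (Suc r) (R_sum p n (M * p) r - newton_series n e (M * p))"
    using ppow_dvd_mono[OF _ approx] by (simp add: r_def)
  ultimately have "ppow_dvd p (Suc r) ((R_sum p n (M * p) r - newton_series n e (M * p))
      + newton_series n e' (M * p))"
    by (rule ppow_dvd_add[rotated])
  then show ?case
    using R_sum_Suc[of p n M r] by (simp add: g r_def c_def algebra_simps)
qed

end

theorem proposition2p3:
  fixes m n p :: nat
  assumes "0 < m" and "2 \<le> n" and "prime p" and "p > n + 1" and "\<not> p dvd m"
  shows "rat_cong (R_sum p n m 1)
            (\<Sum>a=1..n-1. of_nat ((m + n - a - 1) choose (n - 1)) * S_sum p n a 1) p 1
       \<and> (\<forall>r::nat. r \<ge> 2 \<longrightarrow>
            rat_cong (R_sum p n m r) (of_nat m * S_sum p n 1 2 * of_nat p ^ (r - 2)) p r)"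
proof -
  interpret prime_modulus p
    using assms(3) by unfold_locales
  have "0 < n" "n < p"
    using assms(2,4) by simp_all
  show ?thesis
    unfolding rat_cong_iff_ppow_dvd
  proof (intro conjI allI impI)
    show "ppow_dvd p 1 (R_sum p n m 1
        - (\<Sum>a=1..n-1. of_nat ((m + n - a - 1) choose (n - 1)) * S_sum p n a 1))"
      using R_sum_cong_mod_p[OF \<open>0 < n\<close>] .
    fix r :: nat
    assume "2 \<le> r"
    then obtain d where "r = d + 2"
      using le_Suc_ex by (metis add.commute)
    then show "ppow_dvd p r (R_sum p n m r - of_nat m * S_sum p n 1 2 * of_nat p ^ (r - 2))"
      using R_sum_cong_mult_prime_power[OF \<open>0 < n\<close> \<open>n < p\<close>, of d m] S_sum_1_eq_R_sum[OF assms(2)]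
      by simp
  qed
qed

end
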